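(* Let $Q=(q_{ij})\in\mathbb{R}^{k\times k}$ be lower triangular with all diagonal blocks scalar (so $d_i=1$ for all $i$, $k=d$, and $\rho_i=q_{ii}>0$), let $(X_i)$ be the associated absorbed Markov chain with initial distribution $\pi=(\pi_1,\dots,\pi_k)$ and absorption time $T$, and suppose $\pi_{\theta_1}\neq0$ for some $\theta=(\theta_1,\dots,\theta_\kappa)\in\mathcal{P}_{\max}$. Then for all $\ell\in\{1,\dots,k\}$: (i) if $\rho_\ell<\rho_{\max}$ or $\mathcal{P}^{(\ell)}_{\max}=\emptyset$, then $\lim_{n\to\infty}\mathbb{E}_\pi\big[\tfrac{1}{n+1}\#\{m\in\{0,\dots,n\}:X_m\in I_\ell\}\,\big|\,T>n\big]=0$; (ii) if $\rho_\ell=\rho_{\max}$ and $\mathcal{P}^{(\ell)}_{\max}\neq\emptyset$, then \[ \lim_{n\to\infty}\mathbb{E}_\pi\Big[\tfrac{1}{n+1}\#\{m\in\{0,\dots,n\}:X_m\in I_\ell\}\,\Big|\,T>n\Big]=\frac{1}{h^+_{\max}}\,\frac{\sum_{\theta\in\mathcal{P}^{(\ell)}_{\max}}\pi_{\theta_1}q_{\theta_1\theta_2}\cdots q_{\theta_{\kappa-1}\theta_\kappa}\prod_{u\in H^-(\theta)}\frac{1}{\rho_{\max}-\rho_{\theta_u}}}{\sum_{\theta\in\mathcal{P}_{\max}}\pi_{\theta_1}q_{\theta_1\theta_2}\cdots q_{\theta_{\kappa-1}\theta_\kappa}\prod_{u\in H^-(\theta)}\frac{1}{\rho_{\max}-\rho_{\theta_u}}}.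 \]
   Context: Let $P=\begin{pmatrix}1&0\\R&Q\end{pmatrix}$ be a stochastic matrix with $R\in\mathbb{R}^{k\times1}$, $Q\in\mathbb{R}^{k\times k}$, $R,Q\neq0$, $k\ge2$, all eigenvalues of $Q$ of modulus $<1$. $(X_i)$ is the Markov chain with transition matrix $P$ (state $0$ absorbing) and initial distribution $\pi$ on $\{1,\dots,k\}$; $T=\min\{i:X_i=0\}$. Here $Q$ is lower triangular with positive diagonal entries $q_{ii}=:\rho_i$, and $I_\ell=\{\ell\}$. Admissible path: strictly decreasing $\theta=(\theta_1,\dots,\theta_\kappa)$ in $\{1,\dots,k\}$ with $q_{\theta_u\theta_{u+1}}\neq0$ for $u<\kappa$; $\mathcal{P}$ is their set, $\mathcal{P}^{(\ell)}$ those containing $\ell$. $\rho(\theta)=\max_u\rho_{\theta_u}$, $H^+(\theta)=\{u:\rho_{\theta_u}=\rho(\theta)\}$, $H^-(\theta)=\{u:\rho_{\theta_u}<\rho(\theta)\}$, $h^+(\theta)=\#H^+(\theta)$; $\rho_{\max}=\max_i\rho_i$; $h^+_{\max}=\max\{h^+(\theta):\theta\in\mathcal{P},\rho(\theta)=\rho_{\max}\}$; $\mathcal{P}_{\max}=\{\theta\in\mathcal{P}:h^+(\theta)=h^+_{\max},\rho(\theta)=\rho_{\max}\}$; $\mathcal{P}^{(\ell)}_{\max}=\mathcal{P}^{(\ell)}\cap\mathcal{P}_{\max}$. An empty product equals $1$. *)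

theory Defs
  imports Complex_Main "HOL-Library.FuncSet"
begin

text \<open>Matrices are functions nat => nat => real; the transient states are 1..k,
  state 0 is the absorbing state.\<close>

definition lower_triangular :: "nat \<Rightarrow> (nat \<Rightarrow> nat \<Rightarrow> real) \<Rightarrow> bool" where
  "lower_triangular k Q \<longleftrightarrow> (\<forall>i\<in>{1..k}. \<forall>j\<in>{1..k}. i < j \<longrightarrow> Q i j = 0)"

definition is_eigenvalue :: "nat \<Rightarrow> (nat \<Rightarrow> nat \<Rightarrow> real) \<Rightarrow> complex \<Rightarrow> bool" where
  "is_eigenvalue k Q z \<longleftrightarrow> (\<exists>v :: nat \<Rightarrow> complex. (\<exists>i\<in>{1..k}. v i \<noteq> 0) \<and>
      (\<forall>i\<in>{1..k}. (\<Sum>j=1..k. complex_of_real (Q i j) * v j) = z * v i))"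

definition Pmat :: "(nat \<Rightarrow> real) \<Rightarrow> (nat \<Rightarrow> nat \<Rightarrow> real) \<Rightarrow> nat \<Rightarrow> nat \<Rightarrow> real" where
  "Pmat R Q i j = (if i = 0 then (if j = 0 then 1 else 0) else if j = 0 then R i else Q i j)"

definition stochastic :: "nat \<Rightarrow> (nat \<Rightarrow> nat \<Rightarrow> real) \<Rightarrow> bool" where
  "stochastic k P \<longleftrightarrow> (\<forall>i\<in>{0..k}. (\<forall>j\<in>{0..k}. P i j \<ge> 0) \<and> (\<Sum>j=0..k. P i j) = 1)"

definition init :: "nat \<Rightarrow> (nat \<Rightarrow> real) \<Rightarrow> nat \<Rightarrow> real" where
  "init k \<pi> x = (if x \<in> {1..k} then \<pi> x else 0)"

definition path_prob :: "nat \<Rightarrow> (nat \<Rightarrow> real) \<Rightarrow> (nat \<Rightarrow> real) \<Rightarrow> (nat \<Rightarrow> nat \<Rightarrow> real)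
    \<Rightarrow> nat \<Rightarrow> (nat \<Rightarrow> nat) \<Rightarrow> real" where
  "path_prob k \<pi> R Q n x = init k \<pi> (x 0) * (\<Prod>i<n. Pmat R Q (x i) (x (Suc i)))"

definition trajectories :: "nat \<Rightarrow> nat \<Rightarrow> (nat \<Rightarrow> nat) set" where
  "trajectories k n = PiE {0..n} (\<lambda>_. {0..k})"

definition T_gt :: "nat \<Rightarrow> (nat \<Rightarrow> nat) \<Rightarrow> bool" where
  "T_gt n x \<longleftrightarrow> (\<forall>m\<in>{0..n}. x m \<noteq> 0)"

definition I_set :: "nat \<Rightarrow> nat set" where
  "I_set l = {l}"

text \<open>E_pi[ (1/(n+1)) #{m in 0..n : X_m in I_l} | T > n ].\<close>
definition occ_cond_exp :: "nat \<Rightarrow> (nat \<Rightarrow> real) \<Rightarrow> (nat \<Rightarrow> real) \<Rightarrow> (nat \<Rightarrow> nat \<Rightarrow> real)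
    \<Rightarrow> nat \<Rightarrow> nat \<Rightarrow> real" where
  "occ_cond_exp k \<pi> R Q l n =
     (\<Sum>x\<in>trajectories k n. path_prob k \<pi> R Q n x * (if T_gt n x then 1 else 0)
        * (real (card {m\<in>{0..n}. x m \<in> I_set l}) / real (n + 1)))
     / (\<Sum>x\<in>trajectories k n. path_prob k \<pi> R Q n x * (if T_gt n x then 1 else 0))"

text \<open>Admissible paths: nonempty strictly decreasing lists in {1..k} with nonzero
  consecutive transitions. theta_u is written th ! u (0-based).\<close>
definition admissible :: "nat \<Rightarrow> (nat \<Rightarrow> nat \<Rightarrow> real) \<Rightarrow> nat list \<Rightarrow> bool" where
  "admissible k Q th \<longleftrightarrow> th \<noteq> [] \<and> set th \<subseteq> {1..k} \<and> sorted_wrt (>) th \<and>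
     (\<forall>u. Suc u < length th \<longrightarrow> Q (th ! u) (th ! Suc u) \<noteq> 0)"

definition Paths :: "nat \<Rightarrow> (nat \<Rightarrow> nat \<Rightarrow> real) \<Rightarrow> nat list set" where
  "Paths k Q = {th. admissible k Q th}"

definition Paths_l :: "nat \<Rightarrow> (nat \<Rightarrow> nat \<Rightarrow> real) \<Rightarrow> nat \<Rightarrow> nat list set" where
  "Paths_l k Q l = {th \<in> Paths k Q. l \<in> set th}"

definition rho :: "(nat \<Rightarrow> nat \<Rightarrow> real) \<Rightarrow> nat \<Rightarrow> real" where
  "rho Q i = Q i i"

definition rho_path :: "(nat \<Rightarrow> nat \<Rightarrow> real) \<Rightarrow> nat list \<Rightarrow> real" where
  "rho_path Q th = Max ((\<lambda>u. rho Q (th ! u)) ` {..<length th})"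

definition Hplus :: "(nat \<Rightarrow> nat \<Rightarrow> real) \<Rightarrow> nat list \<Rightarrow> nat set" where
  "Hplus Q th = {u. u < length th \<and> rho Q (th ! u) = rho_path Q th}"

definition Hminus :: "(nat \<Rightarrow> nat \<Rightarrow> real) \<Rightarrow> nat list \<Rightarrow> nat set" where
  "Hminus Q th = {u. u < length th \<and> rho Q (th ! u) < rho_path Q th}"

definition hplus :: "(nat \<Rightarrow> nat \<Rightarrow> real) \<Rightarrow> nat list \<Rightarrow> nat" where
  "hplus Q th = card (Hplus Q th)"

definition rho_max :: "nat \<Rightarrow> (nat \<Rightarrow> nat \<Rightarrow> real) \<Rightarrow> real" where
  "rho_max k Q = Max (rho Q ` {1..k})"

definition hplus_max :: "nat \<Rightarrow> (nat \<Rightarrow> nat \<Rightarrow> real) \<Rightarrow> nat" where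
  "hplus_max k Q = Max {hplus Q th | th. th \<in> Paths k Q \<and> rho_path Q th = rho_max k Q}"

definition Paths_max :: "nat \<Rightarrow> (nat \<Rightarrow> nat \<Rightarrow> real) \<Rightarrow> nat list set" where
  "Paths_max k Q = {th \<in> Paths k Q. hplus Q th = hplus_max k Q \<and> rho_path Q th = rho_max k Q}"

definition Paths_max_l :: "nat \<Rightarrow> (nat \<Rightarrow> nat \<Rightarrow> real) \<Rightarrow> nat \<Rightarrow> nat list set" where
  "Paths_max_l k Q l = Paths_l k Q l \<inter> Paths_max k Q"

definition path_weight :: "nat \<Rightarrow> (nat \<Rightarrow> real) \<Rightarrow> (nat \<Rightarrow> nat \<Rightarrow> real) \<Rightarrow> nat list \<Rightarrow> real" where
  "path_weight k \<pi> Q th = \<pi> (th ! 0) * (\<Prod>u<length th - 1. Q (th ! u) (th ! Suc u))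
     * (\<Prod>u\<in>Hminus Q th. 1 / (rho_max k Q - rho Q (th ! u)))"

end

theory Submission
  imports Defs "HOL-Library.Multiset"
begin

text \<open>
  Since \<open>Q\<close> is lower triangular, a trajectory surviving \<open>n\<close> steps runs through the states of an
  admissible path \<open>\<theta>\<close> in decreasing order, staying \<open>e\<^sub>u \<ge> 0\<close> extra steps in \<open>\<theta>\<^sub>u\<close>. Summing
  over the \<open>e\<^sub>u\<close>, the contribution of \<open>\<theta>\<close> to \<open>P\<^sub>i(T > n)\<close> is the product of the \<open>q\<close>'s along
  \<open>\<theta>\<close> times the complete homogeneous symmetric polynomial of degree \<open>n + 1 - \<kappa>\<close> in the rates
  \<open>\<rho>\<^sub>\<theta>\<^sub>u\<close>; the expected number of visits to \<open>l\<close> is the same sum with \<open>\<rho>\<^sub>l\<close> repeated once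
  more. If \<open>\<rho>\<close> is the largest of the rates and \<open>h\<close> its multiplicity, the polynomial grows like
  \<open>C(n, h - 1) \<rho>\<^bsup>n - h + 1\<^esup>\<close> times the product of \<open>1 / (\<rho> - \<rho>\<^sub>\<theta>\<^sub>u)\<close> over the rates below \<open>\<rho>\<close>.
  Hence only the paths in \<open>Paths_max\<close> survive in the limit, and when \<open>\<rho>\<^sub>l = \<rho>\<^sub>m\<^sub>a\<^sub>x\<close> the extra
  copy of \<open>\<rho>\<^sub>l\<close> turns \<open>C(n, H - 1)\<close> into \<open>C(n + 1, H) = (n + 1) / H \<cdot> C(n, H - 1)\<close>, where
  \<open>H = hplus_max\<close>.
\<close>

section \<open>Linear recurrences with convergent coefficients\<close>

lemma LIMSEQ_zero_of_contraction:
  fixes a b :: "nat \<Rightarrow> real"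
  assumes q: "0 \<le> q" "q < 1"
    and step: "eventually (\<lambda>n. a (Suc n) \<le> q * a n + b n) sequentially"
    and b: "b \<longlonglongrightarrow> 0" and a_nonneg: "\<And>n. 0 \<le> a n"
  shows "a \<longlonglongrightarrow> 0"
proof (rule LIMSEQ_I)
  fix r :: real assume r: "0 < r"
  have "eventually (\<lambda>n. b n < r * (1 - q) / 2) sequentially"
    using order_tendstoD(2)[OF b, of "r * (1 - q) / 2"] r q by simp
  with step have "eventually (\<lambda>n. a (Suc n) \<le> q * a n + r * (1 - q) / 2) sequentially"
    by eventually_elim simp
  then obtain N where N: "\<And>n. n \<ge> N \<Longrightarrow> a (Suc n) \<le> q * a n + r * (1 - q) / 2"
    by (auto simp: eventually_sequentially)
  have excess: "a (N + m) - r / 2 \<le> q ^ m * \<bar>a N - r / 2\<bar>" for m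
  proof (induction m)
    case (Suc m)
    have "a (N + Suc m) - r / 2 \<le> q * (a (N + m) - r / 2)"
      using N[of "N + m"] by (simp add: algebra_simps add_divide_distrib diff_divide_distrib)
    also have "\<dots> \<le> q * (q ^ m * \<bar>a N - r / 2\<bar>)"
      using Suc q by (simp add: mult_left_mono)
    finally show ?case by simp
  qed simp
  have "(\<lambda>m. q ^ m * \<bar>a N - r / 2\<bar>) \<longlonglongrightarrow> 0"
    using q by (intro tendsto_mult_left_zero LIMSEQ_power_zero) auto
  then obtain M where M: "\<And>m. m \<ge> M \<Longrightarrow> q ^ m * \<bar>a N - r / 2\<bar> < r / 2"
    using order_tendstoD(2)[of _ 0 sequentially "r / 2"] r by (force simp: eventually_sequentially)
  show "\<exists>n0. \<forall>n\<ge>n0. norm (a n - 0) < r"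
  proof (intro exI allI impI)
    fix n assume "n \<ge> N + M"
    then have "a (N + (n - N)) - r / 2 < r / 2"
      using excess[of "n - N"] M[of "n - N"] by linarith
    then show "norm (a n - 0) < r"
      using \<open>n \<ge> N + M\<close> a_nonneg[of n] by simp
  qed
qed

lemma LIMSEQ_linear_recurrence:
  fixes x \<alpha> \<beta> :: "nat \<Rightarrow> real"
  assumes \<alpha>: "\<alpha> \<longlonglongrightarrow> l" and \<beta>: "\<beta> \<longlonglongrightarrow> m" and l: "\<bar>l\<bar> < 1"
    and rec: "eventually (\<lambda>n. x (Suc n) = \<alpha> n * x n + \<beta> n) sequentially"
  shows "x \<longlonglongrightarrow> m / (1 - l)"
proof -
  define L where "L = m / (1 - l)"
  define q where "q = (1 + \<bar>l\<bar>) / 2"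
  have q: "0 \<le> q" "q < 1" "\<bar>l\<bar> < q" using l by (auto simp: q_def)
  define \<epsilon> where "\<epsilon> n = \<alpha> n * L + \<beta> n - L" for n
  have "\<epsilon> \<longlonglongrightarrow> l * L + m - L"
    unfolding \<epsilon>_def by (intro tendsto_intros \<alpha> \<beta>)
  moreover have "l * L + m - L = 0" using l by (simp add: L_def field_simps)
  ultimately have \<epsilon>: "(\<lambda>n. \<bar>\<epsilon> n\<bar>) \<longlonglongrightarrow> 0" by (simp add: tendsto_rabs_zero)
  have "eventually (\<lambda>n. \<bar>\<alpha> n - l\<bar> < q - \<bar>l\<bar>) sequentially"
    using \<alpha> q by (simp add: tendsto_iff dist_real_def)
  then have "eventually (\<lambda>n. \<bar>\<alpha> n\<bar> \<le> q) sequentially"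
    by eventually_elim linarith
  with rec have "eventually (\<lambda>n. \<bar>x (Suc n) - L\<bar> \<le> q * \<bar>x n - L\<bar> + \<bar>\<epsilon> n\<bar>) sequentially"
  proof eventually_elim
    case (elim n)
    have "x (Suc n) - L = \<alpha> n * (x n - L) + \<epsilon> n"
      using elim(1) by (simp add: \<epsilon>_def algebra_simps)
    also have "\<bar>\<dots>\<bar> \<le> \<bar>\<alpha> n\<bar> * \<bar>x n - L\<bar> + \<bar>\<epsilon> n\<bar>"
      by (metis abs_mult abs_triangle_ineq)
    also have "\<dots> \<le> q * \<bar>x n - L\<bar> + \<bar>\<epsilon> n\<bar>"
      using elim(2) by (simp add: mult_right_mono)
    finally show ?case .
  qed
  then have "(\<lambda>n. \<bar>x n - L\<bar>) \<longlonglongrightarrow> 0"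
    using LIMSEQ_zero_of_contraction[OF q(1,2) _ \<epsilon>] by simp
  then show ?thesis
    by (simp add: L_def LIM_zero_cancel tendsto_rabs_zero_iff)
qed

section \<open>Binomial growth rates\<close>

lemma LIMSEQ_binomial_ratio: "(\<lambda>n. real (n choose k) / real (Suc n choose k)) \<longlonglongrightarrow> 1"
proof -
  have "eventually (\<lambda>n. 1 - real k / real (Suc n) = real (n choose k) / real (Suc n choose k)) sequentially"
    using eventually_ge_at_top[of k]
  proof eventually_elim
    case (elim n)
    have "real (Suc n - k) * real (Suc n choose k) = real (Suc n) * real (n choose k)"
      using binomial_absorb_comp[of "Suc n" k] by (metis diff_Suc_1 of_nat_mult)
    then show ?case
      using elim by (simp add: field_simps of_nat_diff)
  qed
  moreover have "(\<lambda>n. 1 - real k / real (Suc n)) \<longlonglongrightarrow> 1 - 0"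
    by (intro tendsto_intros LIMSEQ_Suc[OF lim_const_over_n])
  ultimately show ?thesis
    by (simp add: tendsto_cong)
qed

lemma LIMSEQ_binomial_quotient_zero:
  assumes "a < b"
  shows "(\<lambda>n. real (n choose a) / real (n choose b)) \<longlonglongrightarrow> 0"
proof (rule tendsto_sandwich[of "\<lambda>_. 0" _ _ "\<lambda>n. real b ^ b / real n"])
  show "eventually (\<lambda>n. real (n choose a) / real (n choose b) \<le> real b ^ b / real n) sequentially"
    using eventually_ge_at_top[of "Suc b"]
  proof eventually_elim
    case (elim n)
    have "n choose a \<le> n ^ a"
      using assms elim by (intro binomial_le_pow) simp
    then have "real (n choose a) \<le> real n ^ a"
      by (metis of_nat_le_iff of_nat_power)
    also have "\<dots> * real n \<le> real n ^ b"
      using power_increasing[of "Suc a" b "real n"] assms elim by (simp add: mult.commute)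
    also have "\<dots> \<le> real b ^ b * real (n choose b)"
    proof -
      have "(real n / real b) ^ b \<le> real (n choose b)"
        using binomial_ge_n_over_k_pow_k[of b n] elim by simp
      moreover have "real b > 0" using assms by simp
      ultimately show ?thesis by (simp add: power_divide field_simps)
    qed
    finally have "real (n choose a) * real n \<le> real b ^ b * real (n choose b)"
      using elim by (simp add: mult_right_mono)
    moreover have "real (n choose b) > 0" "real n > 0" using elim by simp_all
    ultimately show ?case by (simp add: field_simps)
  qed
  show "(\<lambda>n. real b ^ b / real n) \<longlonglongrightarrow> 0" by (rule lim_const_over_n)
qed auto

definition binomial_growth :: "nat \<Rightarrow> real \<Rightarrow> nat \<Rightarrow> real" where
  "binomial_growth h \<rho> n = real (n choose h) * \<rho> ^ (n - h)"

lemma binomial_growth_pos: "0 < \<rho> \<Longrightarrow> h \<le> n \<Longrightarrow> 0 < binomial_growth h \<rho> n"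
  by (simp add: binomial_growth_def)

lemma Suc_mult_binomial_growth: "real (Suc n) * binomial_growth h \<rho> n = real (Suc h) * binomial_growth (Suc h) \<rho> (Suc n)"
proof -
  have "real (Suc n) * real (n choose h) = real (Suc h) * real (Suc n choose Suc h)"
    using Suc_times_binomial_eq[of n h] by (metis of_nat_mult mult.commute)
  then show ?thesis
    unfolding binomial_growth_def diff_Suc_Suc by (metis mult.assoc)
qed

lemma LIMSEQ_binomial_growth_ratio:
  assumes "0 < \<rho>"
  shows "(\<lambda>n. binomial_growth h \<rho> n / binomial_growth h \<rho> (Suc n)) \<longlonglongrightarrow> 1 / \<rho>"
proof -
  have "eventually (\<lambda>n. real (n choose h) / real (Suc n choose h) * (1 / \<rho>)
      = binomial_growth h \<rho> n / binomial_growth h \<rho> (Suc n)) sequentially"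
    using eventually_ge_at_top[of h] by eventually_elim (use assms in \<open>simp add: binomial_growth_def Suc_diff_le\<close>)
  moreover have "(\<lambda>n. real (n choose h) / real (Suc n choose h) * (1 / \<rho>)) \<longlonglongrightarrow> 1 * (1 / \<rho>)"
    by (intro tendsto_intros LIMSEQ_binomial_ratio)
  ultimately show ?thesis by (simp add: tendsto_cong)
qed

lemma LIMSEQ_binomial_growth_quotient_zero:
  assumes "0 < \<rho>'" "\<rho>' \<le> \<rho>" "h' < h \<or> \<rho>' < \<rho>"
  shows "(\<lambda>n. binomial_growth h' \<rho>' n / binomial_growth h \<rho> n) \<longlonglongrightarrow> 0"
proof (cases "\<rho>' < \<rho>")
  case True
  \<comment> \<open>ratio test: consecutive quotients tend to \<open>\<rho>' / \<rho> < 1\<close>\<close>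
  have "(\<lambda>n. (binomial_growth h \<rho> n / binomial_growth h \<rho> (Suc n)) / (binomial_growth h' \<rho>' n / binomial_growth h' \<rho>' (Suc n)))
      \<longlonglongrightarrow> (1 / \<rho>) / (1 / \<rho>')"
    using assms by (intro tendsto_divide LIMSEQ_binomial_growth_ratio) auto
  moreover have "eventually (\<lambda>n. binomial_growth h' \<rho>' (Suc n) / binomial_growth h \<rho> (Suc n)
      = (binomial_growth h \<rho> n / binomial_growth h \<rho> (Suc n)) / (binomial_growth h' \<rho>' n / binomial_growth h' \<rho>' (Suc n))
        * (binomial_growth h' \<rho>' n / binomial_growth h \<rho> n) + 0) sequentially"
    using eventually_ge_at_top[of "max h h'"]
  proof eventually_elim
    case (elim n)
    have "binomial_growth h \<rho> n > 0" "binomial_growth h \<rho> (Suc n) > 0" "binomial_growth h' \<rho>' n > 0" "binomial_growth h' \<rho>' (Suc n) > 0"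
      using elim assms by (auto intro!: binomial_growth_pos)
    then show ?case by (simp add: field_simps)
  qed
  ultimately have "(\<lambda>n. binomial_growth h' \<rho>' n / binomial_growth h \<rho> n) \<longlonglongrightarrow> 0 / (1 - (1 / \<rho>) / (1 / \<rho>'))"
    using assms True by (intro LIMSEQ_linear_recurrence[OF _ tendsto_const]) auto
  then show ?thesis by simp
next
  case False
  then have "\<rho>' = \<rho>" "h' < h" using assms by auto
  have "eventually (\<lambda>n. \<rho> ^ h / \<rho> ^ h' * (real (n choose h') / real (n choose h))
      = binomial_growth h' \<rho>' n / binomial_growth h \<rho> n) sequentially"
    using eventually_ge_at_top[of h]
    by eventually_elim (use assms \<open>\<rho>' = \<rho>\<close> \<open>h' < h\<close> in \<open>simp add: binomial_growth_def power_diff field_simps\<close>)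
  moreover have "(\<lambda>n. \<rho> ^ h / \<rho> ^ h' * (real (n choose h') / real (n choose h))) \<longlonglongrightarrow> \<rho> ^ h / \<rho> ^ h' * 0"
    by (intro tendsto_intros LIMSEQ_binomial_quotient_zero \<open>h' < h\<close>)
  ultimately show ?thesis by (simp add: tendsto_cong)
qed

section \<open>Complete homogeneous symmetric polynomials\<close>

text \<open>\<open>complete_hom rs n\<close> is the complete homogeneous symmetric polynomial of degree
  \<open>n + 1 - length rs\<close> in the entries of \<open>rs\<close> (and 0 if that degree is negative): the total weight
  of the \<open>n\<close>-step walks from the first to the last position of \<open>rs\<close> in which every step either
  stays at the current position \<open>u\<close> (weight \<open>r\<^sub>u\<close>) or moves on to \<open>u + 1\<close> (weight 1).\<close>

fun complete_hom :: "real list \<Rightarrow> nat \<Rightarrow> real" where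
  "complete_hom [] n = 0"
| "complete_hom (r # rs) 0 = (if rs = [] then 1 else 0)"
| "complete_hom (r # rs) (Suc n) = r * complete_hom (r # rs) n + complete_hom rs n"

lemma complete_hom_divided_difference:
  "(a - b) * complete_hom (a # b # rs) n = complete_hom (a # rs) n - complete_hom (b # rs) n"
proof (induction n)
  case (Suc n)
  have "(a - b) * complete_hom (a # b # rs) (Suc n)
      = a * ((a - b) * complete_hom (a # b # rs) n) + (a - b) * complete_hom (b # rs) n"
    by (simp add: algebra_simps)
  also have "\<dots> = a * complete_hom (a # rs) n - b * complete_hom (b # rs) n"
    by (simp only: Suc) (simp add: algebra_simps)
  finally show ?case by simp
qed simp

lemma complete_hom_swap: "complete_hom (a # b # rs) = complete_hom (b # a # rs)"
proof (cases "a = b")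
  case False
  show ?thesis
  proof
    fix n
    have "(a - b) * complete_hom (a # b # rs) n = (a - b) * complete_hom (b # a # rs) n"
      using complete_hom_divided_difference[of a b rs n] complete_hom_divided_difference[of b a rs n]
      by (simp add: algebra_simps)
    then show "complete_hom (a # b # rs) n = complete_hom (b # a # rs) n" using False by simp
  qed
qed simp

lemma complete_hom_Cons_cong:
  assumes "complete_hom xs = complete_hom ys" "length xs = length ys"
  shows "complete_hom (r # xs) = complete_hom (r # ys)"
proof
  fix n show "complete_hom (r # xs) n = complete_hom (r # ys) n"
    by (induction n) (use assms in auto)
qed

lemma complete_hom_move_to_front: "complete_hom (us @ a # vs) = complete_hom (a # us @ vs)"
proof (induction us)
  case (Cons u us)
  have "complete_hom (u # us @ a # vs) = complete_hom (u # a # us @ vs)"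
    using complete_hom_Cons_cong[OF Cons] by simp
  also have "\<dots> = complete_hom (a # u # us @ vs)" by (rule complete_hom_swap)
  finally show ?case by simp
qed simp

lemma complete_hom_mset_cong: "mset xs = mset ys \<Longrightarrow> complete_hom xs = complete_hom ys"
proof (induction xs arbitrary: ys)
  case Nil then show ?case by simp
next
  case (Cons x xs)
  then have "x \<in> set ys" by (metis list.set_intros(1) mset_eq_setD)
  then obtain us vs where ys: "ys = us @ x # vs" by (meson split_list)
  then have "mset xs = mset (us @ vs)" using Cons.prems by simp
  then have "complete_hom (x # xs) = complete_hom (x # us @ vs)"
    using Cons.IH by (intro complete_hom_Cons_cong mset_eq_length)
  then show ?case by (simp add: ys complete_hom_move_to_front)
qed

lemma complete_hom_Cons_Cons_Suc:
  "complete_hom (a # b # rs) (Suc n) = b * complete_hom (a # b # rs) n + complete_hom (a # rs) n"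
  using complete_hom_swap[of a b rs] by (metis complete_hom.simps(3))

lemma complete_hom_replicate: "complete_hom (replicate (Suc h) r) n = binomial_growth h r n"
proof (induction h arbitrary: n)
  case 0
  show ?case by (induction n) (simp_all add: binomial_growth_def)
next
  case (Suc h)
  show ?case
  proof (induction n)
    case (Suc n)
    have "complete_hom (replicate (Suc (Suc h)) r) (Suc n) = r * binomial_growth (Suc h) r n + binomial_growth h r n"
      using Suc.IH \<open>\<And>n. complete_hom (replicate (Suc h) r) n = binomial_growth h r n\<close> by simp
    also have "\<dots> = binomial_growth (Suc h) r (Suc n)"
    proof (cases "Suc h \<le> n")
      case True
      then have "r * r ^ (n - Suc h) = r ^ (n - h)"
        by (metis Suc_diff_le diff_Suc_Suc power_Suc)
      then show ?thesis by (simp add: binomial_growth_def algebra_simps)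
    qed (simp add: binomial_growth_def binomial_eq_0)
    finally show ?case .
  qed (simp add: binomial_growth_def)
qed

lemma complete_hom_append_replicate_asymptotic:
  assumes \<rho>: "0 < \<rho>" and ls: "\<forall>r\<in>set ls. 0 \<le> r \<and> r < \<rho>"
  shows "(\<lambda>n. complete_hom (ls @ replicate (Suc h) \<rho>) n / binomial_growth h \<rho> n)
           \<longlonglongrightarrow> (\<Prod>r\<leftarrow>ls. 1 / (\<rho> - r))"
  using ls
proof (induction ls)
  case Nil
  have "eventually (\<lambda>n. complete_hom ([] @ replicate (Suc h) \<rho>) n / binomial_growth h \<rho> n = 1) sequentially"
    using eventually_ge_at_top[of h]
  proof eventually_elim
    case (elim n)
    then have "binomial_growth h \<rho> n \<noteq> 0" using binomial_growth_pos[OF \<rho>] by force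
    then show ?case by (simp only: append_Nil complete_hom_replicate) simp
  qed
  then show ?case by (simp add: tendsto_eventually)
next
  case (Cons r ls)
  define s where "s = binomial_growth h \<rho>"
  define a where "a = complete_hom (ls @ replicate (Suc h) \<rho>)"
  have r: "0 \<le> r" "r < \<rho>" using Cons.prems by auto
  have ratio: "(\<lambda>n. s n / s (Suc n)) \<longlonglongrightarrow> 1 / \<rho>"
    unfolding s_def by (rule LIMSEQ_binomial_growth_ratio[OF \<rho>])
  have IH: "(\<lambda>n. a n / s n) \<longlonglongrightarrow> (\<Prod>r\<leftarrow>ls. 1 / (\<rho> - r))"
    unfolding a_def s_def by (rule Cons.IH) (use Cons.prems in auto)
  have rec: "eventually (\<lambda>n. complete_hom (r # ls @ replicate (Suc h) \<rho>) (Suc n) / s (Suc n)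
      = r * (s n / s (Suc n)) * (complete_hom (r # ls @ replicate (Suc h) \<rho>) n / s n)
        + (s n / s (Suc n)) * (a n / s n)) sequentially"
    using eventually_ge_at_top[of h]
  proof eventually_elim
    case (elim n)
    then have "s n > 0" using \<rho> by (simp add: s_def binomial_growth_pos)
    then show ?case by (simp add: a_def field_simps add_divide_distrib)
  qed
  have "(\<lambda>n. complete_hom (r # ls @ replicate (Suc h) \<rho>) n / s n)
      \<longlonglongrightarrow> ((1 / \<rho>) * (\<Prod>r\<leftarrow>ls. 1 / (\<rho> - r))) / (1 - r * (1 / \<rho>))"
    by (rule LIMSEQ_linear_recurrence[OF tendsto_mult[OF tendsto_const ratio] tendsto_mult[OF ratio IH] _ rec])
      (use r \<rho> in simp)
  moreover have "(\<Prod>r\<leftarrow>r # ls. 1 / (\<rho> - r)) = ((1 / \<rho>) * (\<Prod>r\<leftarrow>ls. 1 / (\<rho> - r))) / (1 - r * (1 / \<rho>))"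
    using r \<rho> by (simp add: field_simps)
  ultimately show ?case
    unfolding s_def append_Cons by (rule tendsto_cong_limit)
qed

lemma complete_hom_asymptotic:
  assumes rs: "\<forall>r\<in>set rs. 0 < r \<and> r \<le> \<rho>" and count: "count (mset rs) \<rho> = Suc h"
  shows "(\<lambda>n. complete_hom rs n / binomial_growth h \<rho> n) \<longlonglongrightarrow> (\<Prod>r\<leftarrow>filter (\<lambda>r. r < \<rho>) rs. 1 / (\<rho> - r))"
proof -
  have "\<rho> \<in> set rs" using count by (metis count_mset_0_iff nat.distinct(1) set_mset_mset)
  then have \<rho>: "0 < \<rho>" using rs by blast
  have "\<forall>r\<in>set rs. \<not> r < \<rho> \<longleftrightarrow> r = \<rho>" using rs by force
  then have "mset (filter (\<lambda>r. \<not> r < \<rho>) rs) = {#r \<in># mset rs. r = \<rho>#}"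
    by (auto intro!: filter_mset_cong)
  then have "mset rs = mset (filter (\<lambda>r. r < \<rho>) rs @ replicate (Suc h) \<rho>)"
    using multiset_partition[of "mset rs" "\<lambda>r. r < \<rho>"] count by (simp add: filter_eq_replicate_mset)
  then have sorted: "complete_hom rs = complete_hom (filter (\<lambda>r. r < \<rho>) rs @ replicate (Suc h) \<rho>)"
    by (rule complete_hom_mset_cong)
  show ?thesis
    unfolding sorted by (rule complete_hom_append_replicate_asymptotic[OF \<rho>]) (use rs in auto)
qed

lemma complete_hom_negligible:
  assumes rs: "\<forall>r\<in>set rs. 0 < r \<and> r \<le> \<rho>'" and count: "count (mset rs) \<rho>' = Suc h'"
    and "\<rho>' \<le> \<rho>" "h' < h \<or> \<rho>' < \<rho>"
  shows "(\<lambda>n. complete_hom rs n / binomial_growth h \<rho> n) \<longlonglongrightarrow> 0"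
proof -
  have "\<rho>' \<in> set rs" using count by (metis count_mset_0_iff nat.distinct(1) set_mset_mset)
  then have \<rho>': "0 < \<rho>'" using rs by blast
  have "(\<lambda>n. complete_hom rs n / binomial_growth h' \<rho>' n * (binomial_growth h' \<rho>' n / binomial_growth h \<rho> n))
      \<longlonglongrightarrow> (\<Prod>r\<leftarrow>filter (\<lambda>r. r < \<rho>') rs. 1 / (\<rho>' - r)) * 0"
    using assms \<rho>' by (intro tendsto_mult complete_hom_asymptotic LIMSEQ_binomial_growth_quotient_zero)
  then have "(\<lambda>n. complete_hom rs n / binomial_growth h' \<rho>' n * (binomial_growth h' \<rho>' n / binomial_growth h \<rho> n)) \<longlonglongrightarrow> 0"
    by simp
  moreover have "eventually (\<lambda>n. complete_hom rs n / binomial_growth h' \<rho>' n * (binomial_growth h' \<rho>' n / binomial_growth h \<rho> n)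
      = complete_hom rs n / binomial_growth h \<rho> n) sequentially"
    using eventually_ge_at_top[of h']
  proof eventually_elim
    case (elim n)
    then have "binomial_growth h' \<rho>' n \<noteq> 0" using binomial_growth_pos[OF \<rho>'] by force
    then show ?case by simp
  qed
  ultimately show ?thesis by (rule Lim_transform_eventually)
qed

section \<open>First-step analysis of the absorbed chain\<close>

definition trans_prob :: "(nat \<Rightarrow> real) \<Rightarrow> (nat \<Rightarrow> nat \<Rightarrow> real) \<Rightarrow> nat \<Rightarrow> (nat \<Rightarrow> nat) \<Rightarrow> real" where
  "trans_prob R Q n x = (\<Prod>i<n. Pmat R Q (x i) (x (Suc i)))"

definition survival :: "nat \<Rightarrow> (nat \<Rightarrow> real) \<Rightarrow> (nat \<Rightarrow> nat \<Rightarrow> real) \<Rightarrow> nat \<Rightarrow> nat \<Rightarrow> real" where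
  "survival k R Q n i =
     (\<Sum>x\<in>trajectories k n. if x 0 = i \<and> T_gt n x then trans_prob R Q n x else 0)"

definition occupation ::
    "nat \<Rightarrow> (nat \<Rightarrow> real) \<Rightarrow> (nat \<Rightarrow> nat \<Rightarrow> real) \<Rightarrow> nat \<Rightarrow> nat \<Rightarrow> nat \<Rightarrow> real" where
  "occupation k R Q l n i =
     (\<Sum>x\<in>trajectories k n. if x 0 = i \<and> T_gt n x
        then trans_prob R Q n x * real (card {m\<in>{0..n}. x m = l}) else 0)"

lemma bij_betw_case_nat_trajectories:
  "bij_betw (\<lambda>(a, y). case_nat a y) ({0..k} \<times> trajectories k n) (trajectories k (Suc n))"
proof (rule bij_betwI')
  fix p p' :: "nat \<times> (nat \<Rightarrow> nat)"
  obtain a y a' y' where p: "p = (a, y)" "p' = (a', y')" by force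
  have "a = a' \<and> y = y'" if eq: "case_nat a y = case_nat a' y'"
    using fun_cong[OF eq, of 0] fun_cong[OF eq, of "Suc m" for m] by auto
  then show "((\<lambda>(a, y). case_nat a y) p = (\<lambda>(a, y). case_nat a y) p') = (p = p')"
    using p by auto
next
  fix p assume "p \<in> {0..k} \<times> trajectories k n"
  then show "(\<lambda>(a, y). case_nat a y) p \<in> trajectories k (Suc n)"
    by (auto simp: trajectories_def PiE_iff extensional_def split: nat.split)
next
  fix x assume x: "x \<in> trajectories k (Suc n)"
  have "x = case_nat (x 0) (\<lambda>m. x (Suc m))"
    by (simp add: fun_eq_iff split: nat.split)
  moreover have "(x 0, \<lambda>m. x (Suc m)) \<in> {0..k} \<times> trajectories k n"
    using x by (auto simp: trajectories_def PiE_iff extensional_def)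
  ultimately show "\<exists>p\<in>{0..k} \<times> trajectories k n. x = (\<lambda>(a, y). case_nat a y) p"
    by force
qed

lemma sum_trajectories_Suc:
  "(\<Sum>x\<in>trajectories k (Suc n). f x) = (\<Sum>a=0..k. \<Sum>y\<in>trajectories k n. f (case_nat a y))"
  by (simp add: sum.reindex_bij_betw[OF bij_betw_case_nat_trajectories, symmetric]
      sum.cartesian_product split_def)

lemma sum_trajectories_0:
  "(\<Sum>x\<in>trajectories k 0. f x) = (\<Sum>a=0..k. f (case_nat a (\<lambda>_. undefined)))"
proof -
  have "bij_betw (\<lambda>a. case_nat a (\<lambda>_. undefined)) {0..k} (trajectories k 0)"
  proof (rule bij_betwI')
    fix x assume x: "x \<in> trajectories k 0"
    have "x = case_nat (x 0) (\<lambda>_. undefined)"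
      using x by (auto simp: fun_eq_iff trajectories_def PiE_iff extensional_def split: nat.split)
    then show "\<exists>a\<in>{0..k}. x = case_nat a (\<lambda>_. undefined)"
      using x by (auto simp: trajectories_def PiE_iff)
  qed (auto simp: fun_eq_iff trajectories_def PiE_iff extensional_def split: nat.split)
  from sum.reindex_bij_betw[OF this, of f] show ?thesis
    by simp
qed

lemma trans_prob_0 [simp]: "trans_prob R Q 0 x = 1"
  by (simp add: trans_prob_def)

lemma trans_prob_case_nat:
  "trans_prob R Q (Suc n) (case_nat a y) = Pmat R Q a (y 0) * trans_prob R Q n y"
  unfolding trans_prob_def by (subst prod.lessThan_Suc_shift) simp_all

lemma T_gt_case_nat: "T_gt (Suc n) (case_nat a y) \<longleftrightarrow> a \<noteq> 0 \<and> T_gt n y"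
  by (auto simp: T_gt_def split: nat.split)

lemma card_visits_case_nat:
  "card {m\<in>{0..Suc n}. case_nat a y m = l} = (if a = l then 1 else 0) + card {m\<in>{0..n}. y m = l}"
proof -
  have "{m\<in>{0..Suc n}. case_nat a y m = l} = (if a = l then {0} else {}) \<union> Suc ` {m\<in>{0..n}. y m = l}"
    by (auto simp: image_iff split: nat.split_asm)
  moreover have "card (Suc ` {m\<in>{0..n}. y m = l}) = card {m\<in>{0..n}. y m = l}"
    by (simp add: card_image)
  ultimately show ?thesis
    by (simp add: card_Un_disjoint)
qed

lemma trajectory_start:
  "x \<in> trajectories k n \<Longrightarrow> T_gt n x \<Longrightarrow> x 0 \<in> {1..k}"
  by (auto simp: trajectories_def T_gt_def PiE_iff Suc_le_eq)

lemma sum_trajectories_first_step: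
  assumes "i \<in> {1..k}"
  shows "(\<Sum>x\<in>trajectories k (Suc n). if x 0 = i \<and> T_gt (Suc n) x then F x else 0)
     = (\<Sum>y\<in>trajectories k n. if T_gt n y then F (case_nat i y) else 0)"
proof -
  have "(\<Sum>a=0..k. \<Sum>y\<in>trajectories k n.
          if case_nat a y 0 = i \<and> T_gt (Suc n) (case_nat a y) then F (case_nat a y) else 0)
      = (\<Sum>a=0..k. if a = i then \<Sum>y\<in>trajectories k n. if T_gt n y then F (case_nat i y) else 0 else 0)"
    using assms by (intro sum.cong) (auto simp: T_gt_case_nat)
  then show ?thesis
    using assms by (simp add: sum_trajectories_Suc)
qed

lemma sum_trajectories_second_state:
  assumes "i \<noteq> 0"
  shows "(\<Sum>y\<in>trajectories k n. if T_gt n y then Pmat R Q i (y 0) * G y else 0)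
       = (\<Sum>j=1..k. Q i j * (\<Sum>y\<in>trajectories k n. if y 0 = j \<and> T_gt n y then G y else 0))"
proof -
  have "(\<Sum>y\<in>trajectories k n. if T_gt n y then Pmat R Q i (y 0) * G y else 0)
      = (\<Sum>y\<in>trajectories k n. \<Sum>j=1..k. if y 0 = j \<and> T_gt n y then Q i j * G y else 0)"
  proof (rule sum.cong[OF refl])
    fix y assume y: "y \<in> trajectories k n"
    show "(if T_gt n y then Pmat R Q i (y 0) * G y else 0)
      = (\<Sum>j=1..k. if y 0 = j \<and> T_gt n y then Q i j * G y else 0)"
      using trajectory_start[OF y] assms by (cases "T_gt n y") (auto simp: Pmat_def sum.delta')
  qed
  also have "\<dots> = (\<Sum>j=1..k. \<Sum>y\<in>trajectories k n. if y 0 = j \<and> T_gt n y then Q i j * G y else 0)"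
    by (rule sum.swap)
  finally show ?thesis
    by (simp add: sum_distrib_left if_distrib cong: if_cong)
qed

lemma survival_0:
  assumes "i \<in> {1..k}"
  shows "survival k R Q 0 i = 1"
proof -
  have "survival k R Q 0 i = (\<Sum>a=0..k. if a = i then 1 else 0)"
    unfolding survival_def sum_trajectories_0 using assms by (intro sum.cong) (auto simp: T_gt_def)
  then show ?thesis using assms by simp
qed

lemma survival_Suc:
  "i \<in> {1..k} \<Longrightarrow> survival k R Q (Suc n) i = (\<Sum>j=1..k. Q i j * survival k R Q n j)"
  unfolding survival_def
  by (simp add: sum_trajectories_first_step trans_prob_case_nat sum_trajectories_second_state
      cong: if_cong)

lemma occupation_0:
  assumes "i \<in> {1..k}"
  shows "occupation k R Q l 0 i = (if i = l then 1 else 0)"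
proof -
  have visits: "card {m\<in>{0..0::nat}. P m} = (if P 0 then 1 else 0)" for P
    by (simp add: Collect_conj_eq)
  have "occupation k R Q l 0 i = (\<Sum>a=0..k. if a = i then (if i = l then 1 else 0) else 0)"
    unfolding occupation_def sum_trajectories_0 visits using assms
    by (intro sum.cong) (auto simp: T_gt_def)
  then show ?thesis using assms by simp
qed

lemma occupation_Suc:
  assumes "i \<in> {1..k}"
  shows "occupation k R Q l (Suc n) i
    = (\<Sum>j=1..k. Q i j * occupation k R Q l n j) + (if i = l then survival k R Q (Suc n) i else 0)"
proof -
  have "occupation k R Q l (Suc n) i = (\<Sum>y\<in>trajectories k n.
          (if T_gt n y then Pmat R Q i (y 0) * (trans_prob R Q n y * real (card {m\<in>{0..n}. y m = l})) else 0)
        + (if i = l then (if T_gt n y then Pmat R Q i (y 0) * trans_prob R Q n y else 0) else 0))"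
    unfolding occupation_def sum_trajectories_first_step[OF assms] card_visits_case_nat
    by (intro sum.cong) (auto simp: trans_prob_case_nat algebra_simps)
  also have "\<dots> = (\<Sum>y\<in>trajectories k n. if T_gt n y
          then Pmat R Q i (y 0) * (trans_prob R Q n y * real (card {m\<in>{0..n}. y m = l})) else 0)
        + (if i = l then (\<Sum>y\<in>trajectories k n. if T_gt n y then Pmat R Q i (y 0) * trans_prob R Q n y else 0) else 0)"
    by (cases "i = l") (simp_all add: sum.distrib)
  also have "\<dots> = (\<Sum>j=1..k. Q i j * occupation k R Q l n j) + (if i = l then survival k R Q (Suc n) i else 0)"
    using assms
    by (simp add: sum_trajectories_second_state occupation_def survival_def sum_trajectories_first_step
        trans_prob_case_nat cong: if_cong)
  finally show ?thesis .
qed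

lemma sum_trajectories_by_start:
  "(\<Sum>x\<in>trajectories k n. path_prob k \<pi> R Q n x * (if T_gt n x then 1 else 0) * g x)
     = (\<Sum>i=1..k. \<pi> i * (\<Sum>x\<in>trajectories k n. if x 0 = i \<and> T_gt n x then trans_prob R Q n x * g x else 0))"
proof -
  have "(\<Sum>x\<in>trajectories k n. path_prob k \<pi> R Q n x * (if T_gt n x then 1 else 0) * g x)
      = (\<Sum>x\<in>trajectories k n. \<Sum>i=1..k. if x 0 = i \<and> T_gt n x then \<pi> i * (trans_prob R Q n x * g x) else 0)"
  proof (rule sum.cong[OF refl])
    fix x assume x: "x \<in> trajectories k n"
    show "path_prob k \<pi> R Q n x * (if T_gt n x then 1 else 0) * g x
      = (\<Sum>i=1..k. if x 0 = i \<and> T_gt n x then \<pi> i * (trans_prob R Q n x * g x) else 0)"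
      using trajectory_start[OF x] by (cases "T_gt n x") (auto simp: path_prob_def init_def trans_prob_def sum.delta')
  qed
  also have "\<dots> = (\<Sum>i=1..k. \<Sum>x\<in>trajectories k n. if x 0 = i \<and> T_gt n x then \<pi> i * (trans_prob R Q n x * g x) else 0)"
    by (rule sum.swap)
  finally show ?thesis
    by (simp add: sum_distrib_left if_distrib cong: if_cong)
qed

lemma occ_cond_exp_eq:
  "occ_cond_exp k \<pi> R Q l n
     = (\<Sum>i=1..k. \<pi> i * occupation k R Q l n i) / real (n + 1) / (\<Sum>i=1..k. \<pi> i * survival k R Q n i)"
proof -
  have "(\<Sum>x\<in>trajectories k n. path_prob k \<pi> R Q n x * (if T_gt n x then 1 else 0)
        * (real (card {m\<in>{0..n}. x m \<in> I_set l}) / real (n + 1)))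
      = (\<Sum>x\<in>trajectories k n. path_prob k \<pi> R Q n x * (if T_gt n x then 1 else 0)
        * real (card {m\<in>{0..n}. x m = l})) / real (n + 1)"
    by (simp add: I_set_def sum_divide_distrib)
  also have "\<dots> = (\<Sum>i=1..k. \<pi> i * occupation k R Q l n i) / real (n + 1)"
    by (simp only: sum_trajectories_by_start occupation_def)
  finally have numerator: "(\<Sum>x\<in>trajectories k n. path_prob k \<pi> R Q n x * (if T_gt n x then 1 else 0)
        * (real (card {m\<in>{0..n}. x m \<in> I_set l}) / real (n + 1)))
      = (\<Sum>i=1..k. \<pi> i * occupation k R Q l n i) / real (n + 1)" .
  have denominator: "(\<Sum>x\<in>trajectories k n. path_prob k \<pi> R Q n x * (if T_gt n x then 1 else 0))
      = (\<Sum>i=1..k. \<pi> i * survival k R Q n i)"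
    using sum_trajectories_by_start[where g = "\<lambda>_. 1"] by (simp add: survival_def cong: if_cong)
  show ?thesis
    unfolding occ_cond_exp_def numerator denominator ..
qed

section \<open>Expansion over admissible paths\<close>

definition Paths_from :: "nat \<Rightarrow> (nat \<Rightarrow> nat \<Rightarrow> real) \<Rightarrow> nat \<Rightarrow> nat list set" where
  "Paths_from k Q i = {th \<in> Paths k Q. hd th = i}"

definition path_prod :: "(nat \<Rightarrow> nat \<Rightarrow> real) \<Rightarrow> nat list \<Rightarrow> real" where
  "path_prod Q th = (\<Prod>u<length th - 1. Q (th ! u) (th ! Suc u))"

definition successors :: "(nat \<Rightarrow> nat \<Rightarrow> real) \<Rightarrow> nat \<Rightarrow> nat set" where
  "successors Q i = {j \<in> {1..<i}. Q i j \<noteq> 0}"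

lemma finite_successors [simp]: "finite (successors Q i)"
  by (simp add: successors_def)

lemma admissible_iff_successively:
  "admissible k Q th \<longleftrightarrow>
     th \<noteq> [] \<and> set th \<subseteq> {1..k} \<and> sorted_wrt (>) th \<and> successively (\<lambda>i j. Q i j \<noteq> 0) th"
  by (simp add: admissible_def successively_conv_nth)

lemma admissible_Cons_Cons:
  "admissible k Q (i # j # th) \<longleftrightarrow> i \<in> {1..k} \<and> j < i \<and> Q i j \<noteq> 0 \<and> admissible k Q (j # th)"
  unfolding admissible_iff_successively by (auto simp: sorted_wrt2 transp_def)

lemma admissible_singleton: "admissible k Q [i] \<longleftrightarrow> i \<in> {1..k}"
  by (simp add: admissible_def)

lemma Paths_nonempty: "th \<in> Paths k Q \<Longrightarrow> th \<noteq> []"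
  by (simp add: Paths_def admissible_def)

lemma set_Paths_subset: "th \<in> Paths k Q \<Longrightarrow> set th \<subseteq> {1..k}"
  by (simp add: Paths_def admissible_def)

lemma Paths_le_hd: "th \<in> Paths k Q \<Longrightarrow> x \<in> set th \<Longrightarrow> x \<le> hd th"
  by (cases th) (auto simp: Paths_def admissible_def)

lemma finite_Paths: "finite (Paths k Q)"
proof (rule finite_subset)
  show "Paths k Q \<subseteq> {th. set th \<subseteq> {1..k} \<and> length th \<le> k}"
  proof safe
    fix th assume th: "th \<in> Paths k Q"
    then have "sorted_wrt (<) (rev th)"
      by (simp add: Paths_def admissible_def sorted_wrt_rev)
    then have "distinct th"
      by (simp add: strict_sorted_iff)
    then have "length th = card (set th)"
      by (simp add: distinct_card)
    also have "\<dots> \<le> k"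
      using card_mono[OF _ set_Paths_subset[OF th]] by simp
    finally show "length th \<le> k" .
  qed (use set_Paths_subset in blast)
  show "finite {th. set th \<subseteq> {1..k} \<and> length th \<le> k}"
    by (rule finite_lists_length_le) simp
qed

lemma finite_Paths_from [simp]: "finite (Paths_from k Q i)"
  using finite_Paths by (simp add: Paths_from_def)

lemma Paths_from_nonempty: "th \<in> Paths_from k Q i \<Longrightarrow> th \<noteq> []"
  unfolding Paths_from_def using Paths_nonempty by blast

lemma hd_Paths_from: "th \<in> Paths_from k Q i \<Longrightarrow> hd th = i"
  by (simp add: Paths_from_def)

lemma Paths_from_Cons:
  assumes "th \<in> Paths_from k Q i"
  obtains t where "th = i # t"
  using assms Paths_nonempty by (cases th) (auto simp: Paths_from_def)

lemma Paths_from_eq: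
  assumes "i \<in> {1..k}"
  shows "Paths_from k Q i = insert [i] (\<Union>j\<in>successors Q i. (#) i ` Paths_from k Q j)"
proof (intro set_eqI iffI)
  fix th assume th: "th \<in> Paths_from k Q i"
  then obtain t where t: "th = i # t" by (rule Paths_from_Cons)
  show "th \<in> insert [i] (\<Union>j\<in>successors Q i. (#) i ` Paths_from k Q j)"
  proof (cases t)
    case (Cons j t')
    have "admissible k Q (i # j # t')"
      using th t Cons by (simp add: Paths_from_def Paths_def)
    then have "j \<in> successors Q i" "t \<in> Paths_from k Q j"
      using Cons by (auto simp: admissible_Cons_Cons successors_def Paths_from_def Paths_def admissible_def)
    then show ?thesis
      using t by blast
  qed (simp add: t)
next
  fix th assume "th \<in> insert [i] (\<Union>j\<in>successors Q i. (#) i ` Paths_from k Q j)"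
  then consider "th = [i]" | j t where "j \<in> successors Q i" "t \<in> Paths_from k Q j" "th = i # t"
    by blast
  then show "th \<in> Paths_from k Q i"
  proof cases
    case 1
    then show ?thesis using assms by (simp add: Paths_from_def Paths_def admissible_singleton)
  next
    case 2
    then obtain t' where "t = j # t'" by (auto elim: Paths_from_Cons)
    then show ?thesis
      using 2 assms by (simp add: Paths_from_def Paths_def admissible_Cons_Cons successors_def)
  qed
qed

lemma sum_Paths_from:
  assumes "i \<in> {1..k}"
  shows "(\<Sum>th\<in>Paths_from k Q i. F th) = F [i] + (\<Sum>j\<in>successors Q i. \<Sum>th\<in>Paths_from k Q j. F (i # th))"
proof -
  have "[i] \<notin> (\<Union>j\<in>successors Q i. (#) i ` Paths_from k Q j)"
    using Paths_nonempty by (force simp: Paths_from_def)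
  then have "(\<Sum>th\<in>Paths_from k Q i. F th) = F [i] + (\<Sum>th\<in>(\<Union>j\<in>successors Q i. (#) i ` Paths_from k Q j). F th)"
    unfolding Paths_from_eq[OF assms] by (subst sum.insert) auto
  also have "\<dots> = F [i] + (\<Sum>j\<in>successors Q i. \<Sum>th\<in>(#) i ` Paths_from k Q j. F th)"
    by (subst sum.UNION_disjoint) (simp_all, auto simp: Paths_from_def)
  also have "\<dots> = F [i] + (\<Sum>j\<in>successors Q i. \<Sum>th\<in>Paths_from k Q j. F (i # th))"
    by (simp add: sum.reindex)
  finally show ?thesis .
qed

lemma path_prod_singleton [simp]: "path_prod Q [i] = 1"
  by (simp add: path_prod_def)

lemma path_prod_Cons: "th \<noteq> [] \<Longrightarrow> path_prod Q (i # th) = Q i (hd th) * path_prod Q th"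
  by (cases th) (simp_all add: path_prod_def prod.lessThan_Suc_shift del: prod.lessThan_Suc)

lemma sum_row_lower_triangular:
  assumes "i \<in> {1..k}" "lower_triangular k Q"
  shows "(\<Sum>j=1..k. Q i j * f j) = Q i i * f i + (\<Sum>j\<in>successors Q i. Q i j * f j)"
proof -
  have "{1..k} = insert i ({1..<i} \<union> {Suc i..k})" using assms(1) by auto
  moreover have "(\<Sum>j\<in>{1..<i} \<union> {Suc i..k}. Q i j * f j)
      = (\<Sum>j\<in>{1..<i}. Q i j * f j) + (\<Sum>j\<in>{Suc i..k}. Q i j * f j)"
    by (rule sum.union_disjoint) auto
  moreover have "(\<Sum>j\<in>{Suc i..k}. Q i j * f j) = 0"
    using assms by (intro sum.neutral) (auto simp: lower_triangular_def)
  moreover have "(\<Sum>j\<in>{1..<i}. Q i j * f j) = (\<Sum>j\<in>successors Q i. Q i j * f j)"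
    by (rule sum.mono_neutral_right) (auto simp: successors_def)
  ultimately show ?thesis by simp
qed

lemma survival_eq_sum_Paths_from:
  assumes "lower_triangular k Q" "i \<in> {1..k}"
  shows "survival k R Q n i = (\<Sum>th\<in>Paths_from k Q i. path_prod Q th * complete_hom (map (rho Q) th) n)"
  using assms(2)
proof (induction n arbitrary: i)
  case 0
  have "complete_hom (map (rho Q) (i # th)) 0 = 0" if "th \<in> Paths_from k Q j" for j th
    using Paths_from_nonempty[OF that] by simp
  then show ?case
    using 0 by (simp add: survival_0 sum_Paths_from)
next
  case (Suc n)
  define S where "S m th = path_prod Q th * complete_hom (map (rho Q) th) m" for m th
  \<comment> \<open>on a path \<open>i # t\<close> the first of \<open>Suc n\<close> steps either stays at \<open>i\<close> or moves on along \<open>t\<close>\<close>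
  have step: "S (Suc n) (i # t) = Q i i * S n (i # t) + Q i j * S n t"
    if "t \<in> Paths_from k Q j" for j t
    using that Paths_from_nonempty[OF that]
    by (cases t) (auto simp: S_def rho_def path_prod_Cons Paths_from_def algebra_simps)
  have single: "S (Suc n) [i] = Q i i * S n [i]"
    by (simp add: S_def rho_def)
  have "(\<Sum>th\<in>Paths_from k Q i. S (Suc n) th)
      = S (Suc n) [i] + (\<Sum>j\<in>successors Q i. \<Sum>t\<in>Paths_from k Q j. S (Suc n) (i # t))"
    by (rule sum_Paths_from[OF Suc.prems])
  also have "\<dots> = Q i i * S n [i]
      + (\<Sum>j\<in>successors Q i. \<Sum>t\<in>Paths_from k Q j. Q i i * S n (i # t) + Q i j * S n t)"
    by (simp add: single step cong: sum.cong)
  also have "\<dots> = Q i i * (\<Sum>th\<in>Paths_from k Q i. S n th)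
      + (\<Sum>j\<in>successors Q i. Q i j * (\<Sum>t\<in>Paths_from k Q j. S n t))"
    by (simp add: sum_Paths_from[OF Suc.prems] sum.distrib sum_distrib_left algebra_simps)
  also have "\<dots> = Q i i * survival k R Q n i + (\<Sum>j\<in>successors Q i. Q i j * survival k R Q n j)"
    using Suc.IH Suc.prems by (simp add: S_def successors_def)
  also have "\<dots> = survival k R Q (Suc n) i"
    using survival_Suc[OF Suc.prems] sum_row_lower_triangular[OF Suc.prems assms(1)] by simp
  finally show ?case by (simp add: S_def)
qed

lemma Paths_from_not_in_set: "th \<in> Paths_from k Q j \<Longrightarrow> j < l \<Longrightarrow> l \<notin> set th"
  using Paths_le_hd by (force simp: Paths_from_def)

lemma sum_Paths_from_visits_tl:
  assumes lt: "lower_triangular k Q" and i: "i \<in> {1..k}"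
  shows "(\<Sum>th\<in>Paths_from k Q i.
      if l \<in> set th then path_prod Q th * complete_hom (rho Q l # map (rho Q) (tl th)) n else 0)
    = (\<Sum>j\<in>successors Q i. Q i j * (\<Sum>t\<in>Paths_from k Q j.
        if l \<in> set t then path_prod Q t * complete_hom (rho Q l # map (rho Q) t) n else 0))
      + (if i = l then survival k R Q n i else 0)"
proof (cases "i = l")
  case True
  have "(\<Sum>t\<in>Paths_from k Q j. if l \<in> set t then path_prod Q t * complete_hom (rho Q l # map (rho Q) t) n else 0)
      = 0" if "j \<in> successors Q i" for j
    using that True Paths_from_not_in_set[of _ k Q j l] by (intro sum.neutral) (auto simp: successors_def)
  moreover have "(if l \<in> set th then path_prod Q th * complete_hom (rho Q l # map (rho Q) (tl th)) n else 0)
      = path_prod Q th * complete_hom (map (rho Q) th) n" if "th \<in> Paths_from k Q i" for th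
    using that True by (auto elim: Paths_from_Cons)
  ultimately show ?thesis
    using True i by (simp add: survival_eq_sum_Paths_from[OF lt])
next
  case False
  then show ?thesis
    using i
    by (simp add: sum_Paths_from path_prod_Cons Paths_from_nonempty hd_Paths_from sum_distrib_left if_distrib
        mult.assoc cong: sum.cong if_cong)
qed

lemma occupation_eq_sum_Paths_from:
  assumes lt: "lower_triangular k Q" and "i \<in> {1..k}"
  shows "occupation k R Q l n i = (\<Sum>th\<in>Paths_from k Q i.
     if l \<in> set th then path_prod Q th * complete_hom (rho Q l # map (rho Q) th) (Suc n) else 0)"
  using assms(2)
proof (induction n arbitrary: i)
  case 0
  have "(if l \<in> set (i # t) then path_prod Q (i # t) * complete_hom (rho Q l # map (rho Q) (i # t)) (Suc 0) else 0) = 0"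
    if "t \<in> Paths_from k Q j" for j t
    using Paths_from_nonempty[OF that] by simp
  then show ?case
    using 0 by (simp add: occupation_0 sum_Paths_from)
next
  case (Suc n)
  define F where "F m th = (if l \<in> set th then path_prod Q th * complete_hom (rho Q l # map (rho Q) th) (Suc m) else 0)"
    for m th
  define G where "G th = (if l \<in> set th then path_prod Q th * complete_hom (rho Q l # map (rho Q) (tl th)) (Suc n) else 0)"
    for th
  have step: "F (Suc n) th = rho Q i * F n th + G th" if th: "th \<in> Paths_from k Q i" for th
  proof -
    obtain t where "th = i # t" using th by (rule Paths_from_Cons)
    then show ?thesis
      using complete_hom_Cons_Cons_Suc[of "rho Q l" "rho Q i" "map (rho Q) t" "Suc n"]
      by (simp add: F_def G_def algebra_simps del: complete_hom.simps)
  qed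
  have IH: "occupation k R Q l n j = (\<Sum>th\<in>Paths_from k Q j. F n th)" if "j \<in> {1..k}" for j
    using Suc.IH[OF that] by (simp add: F_def)
  have "(\<Sum>th\<in>Paths_from k Q i. F (Suc n) th)
      = rho Q i * (\<Sum>th\<in>Paths_from k Q i. F n th) + (\<Sum>th\<in>Paths_from k Q i. G th)"
    by (simp add: step sum.distrib sum_distrib_left cong: sum.cong)
  also have "\<dots> = rho Q i * occupation k R Q l n i + (\<Sum>j\<in>successors Q i. Q i j * occupation k R Q l n j)
        + (if i = l then survival k R Q (Suc n) i else 0)"
    using Suc.prems IH sum_Paths_from_visits_tl[OF lt Suc.prems, of l "Suc n" R]
    by (simp add: G_def F_def successors_def)
  also have "\<dots> = occupation k R Q l (Suc n) i"
    using occupation_Suc[OF Suc.prems] sum_row_lower_triangular[OF Suc.prems lt] by (simp add: rho_def)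
  finally show ?case by (simp add: F_def)
qed

lemma sum_Paths_by_start:
  fixes \<pi> :: "nat \<Rightarrow> real"
  shows "(\<Sum>i=1..k. \<pi> i * (\<Sum>th\<in>Paths_from k Q i. f th)) = (\<Sum>th\<in>Paths k Q. \<pi> (hd th) * f th)"
proof -
  have "hd ` Paths k Q \<subseteq> {1..k}"
    using set_Paths_subset Paths_nonempty by (blast dest: hd_in_set)
  from sum.group[OF finite_Paths finite_atLeastAtMost this, of "\<lambda>th. \<pi> (hd th) * f th"]
  have "(\<Sum>th\<in>Paths k Q. \<pi> (hd th) * f th)
      = (\<Sum>i=1..k. \<Sum>th\<in>{th \<in> Paths k Q. hd th = i}. \<pi> (hd th) * f th)"
    by simp
  also have "\<dots> = (\<Sum>i=1..k. \<pi> i * (\<Sum>th\<in>Paths_from k Q i. f th))"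
    by (simp add: Paths_from_def sum_distrib_left)
  finally show ?thesis ..
qed

lemma rho_path_eq_Max: "rho_path Q th = Max (rho Q ` set th)"
proof -
  have "(\<lambda>u. rho Q (th ! u)) ` {..<length th} = rho Q ` set th"
    using nth_image[of "length th" th] by (simp add: image_image[symmetric] lessThan_atLeast0)
  then show ?thesis by (simp add: rho_path_def)
qed

lemma rho_le_rho_path: "x \<in> set th \<Longrightarrow> rho Q x \<le> rho_path Q th"
  by (simp add: rho_path_eq_Max)

lemma rho_path_in_image: "th \<noteq> [] \<Longrightarrow> rho_path Q th \<in> rho Q ` set th"
  by (simp add: rho_path_eq_Max)

lemma rho_path_le_rho_max:
  assumes "th \<in> Paths k Q"
  shows "rho_path Q th \<le> rho_max k Q"
  unfolding rho_path_eq_Max rho_max_def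
  using set_Paths_subset[OF assms] Paths_nonempty[OF assms] by (intro Max_mono image_mono) auto

lemma hplus_eq_count: "hplus Q th = count (mset (map (rho Q) th)) (rho_path Q th)"
proof -
  have "count (mset xs) x = length (filter (\<lambda>y. y = x) xs)" for xs and x :: real
    by (induction xs) auto
  from this[of "map (rho Q) th" "rho_path Q th"] show ?thesis
    by (simp add: hplus_def Hplus_def length_filter_conv_card cong: conj_cong)
qed

lemma hplus_pos: "th \<noteq> [] \<Longrightarrow> 0 < hplus Q th"
  unfolding hplus_eq_count using rho_path_in_image by fastforce

lemma hplus_le_hplus_max:
  assumes "th \<in> Paths k Q" "rho_path Q th = rho_max k Q"
  shows "hplus Q th \<le> hplus_max k Q"
  unfolding hplus_max_def using assms finite_Paths by (intro Max_ge) auto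

lemma prod_list_filter_conv_prod_nth:
  "(\<Prod>x\<leftarrow>filter P xs. g x) = (\<Prod>u\<in>{u. u < length xs \<and> P (xs ! u)}. g (xs ! u))"
proof -
  have "(\<Prod>x\<leftarrow>filter P xs. g x) = (\<Prod>u<length xs. if P (xs ! u) then g (xs ! u) else 1)"
    by (induction xs) (simp_all add: prod.lessThan_Suc_shift del: prod.lessThan_Suc cong: if_cong)
  also have "\<dots> = (\<Prod>u\<in>{u\<in>{..<length xs}. P (xs ! u)}. g (xs ! u))"
    by (rule prod.inter_filter[symmetric]) simp
  finally show ?thesis by simp
qed

lemma prod_Hminus_eq_prod_list:
  "(\<Prod>u\<in>Hminus Q th. g (rho Q (th ! u))) = (\<Prod>r\<leftarrow>filter (\<lambda>r. r < rho_path Q th) (map (rho Q) th). g r)"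
  unfolding prod_list_filter_conv_prod_nth Hminus_def by (intro prod.cong) auto

lemma rho_Paths_bounds:
  assumes "th \<in> Paths k Q" "\<And>i. i \<in> {1..k} \<Longrightarrow> 0 < Q i i"
  shows "\<forall>r\<in>set (map (rho Q) th). 0 < r \<and> r \<le> rho_path Q th"
  using assms set_Paths_subset[OF assms(1)] rho_le_rho_path by (force simp: rho_def)

lemma complete_hom_path_limit:
  assumes th: "th \<in> Paths k Q" and diag: "\<And>i. i \<in> {1..k} \<Longrightarrow> 0 < Q i i"
    and H: "hplus_max k Q = Suc h"
  shows "(\<lambda>n. complete_hom (map (rho Q) th) n / binomial_growth h (rho_max k Q) n)
    \<longlonglongrightarrow> (if th \<in> Paths_max k Q
         then (\<Prod>r\<leftarrow>filter (\<lambda>r. r < rho_max k Q) (map (rho Q) th). 1 / (rho_max k Q - r)) else 0)"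
proof -
  obtain h' where h': "hplus Q th = Suc h'"
    using hplus_pos[OF Paths_nonempty[OF th]] gr0_conv_Suc by blast
  note bounds = rho_Paths_bounds[OF th diag]
  have count: "count (mset (map (rho Q) th)) (rho_path Q th) = Suc h'"
    using h' by (simp add: hplus_eq_count)
  show ?thesis
  proof (cases "th \<in> Paths_max k Q")
    case True
    then have "rho_path Q th = rho_max k Q" "h' = h"
      using h' H by (auto simp: Paths_max_def)
    then show ?thesis
      using complete_hom_asymptotic[OF bounds count] True by simp
  next
    case False
    then have "h' < h \<or> rho_path Q th < rho_max k Q"
      using th h' H hplus_le_hplus_max[OF th] rho_path_le_rho_max[OF th]
      by (force simp: Paths_max_def)
    then show ?thesis
      using complete_hom_negligible[OF bounds count rho_path_le_rho_max[OF th]] False by simp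
  qed
qed

lemma complete_hom_Cons_path_limit:
  assumes th: "th \<in> Paths k Q" and l: "l \<in> set th" and diag: "\<And>i. i \<in> {1..k} \<Longrightarrow> 0 < Q i i"
    and H: "hplus_max k Q = Suc h"
  shows "(\<lambda>n. complete_hom (rho Q l # map (rho Q) th) n / binomial_growth (Suc h) (rho_max k Q) n)
    \<longlonglongrightarrow> (if th \<in> Paths_max k Q \<and> rho Q l = rho_max k Q
         then (\<Prod>r\<leftarrow>filter (\<lambda>r. r < rho_max k Q) (map (rho Q) th). 1 / (rho_max k Q - r)) else 0)"
proof -
  define rs where "rs = rho Q l # map (rho Q) th"
  have bounds: "\<forall>r\<in>set rs. 0 < r \<and> r \<le> rho_path Q th"
    using rho_Paths_bounds[OF th diag] l by (auto simp: rs_def)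
  have "0 < count (mset rs) (rho_path Q th)"
    using hplus_pos[OF Paths_nonempty[OF th]] by (simp add: rs_def hplus_eq_count)
  then obtain h' where h': "count (mset rs) (rho_path Q th) = Suc h'"
    using gr0_conv_Suc by blast
  \<comment> \<open>the extra copy of \<open>rho Q l\<close> raises the multiplicity of the top rate to \<open>Suc (Suc h)\<close>
    exactly when \<open>th \<in> Paths_max k Q\<close> and \<open>rho Q l = rho_max k Q\<close>\<close>
  have count: "Suc h' = hplus Q th + (if rho Q l = rho_path Q th then 1 else 0)"
    by (simp add: rs_def hplus_eq_count flip: h')
  show ?thesis
  proof (cases "th \<in> Paths_max k Q \<and> rho Q l = rho_max k Q")
    case True
    then have "rho_path Q th = rho_max k Q" "h' = Suc h"
      using count H by (auto simp: Paths_max_def)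
    then show ?thesis
      using complete_hom_asymptotic[OF bounds h'] True by (simp add: rs_def)
  next
    case False
    then have "h' < Suc h \<or> rho_path Q th < rho_max k Q"
      using th count H hplus_le_hplus_max[OF th] rho_path_le_rho_max[OF th]
      by (auto simp: Paths_max_def split: if_splits)
    then have "(\<lambda>n. complete_hom rs n / binomial_growth (Suc h) (rho_max k Q) n) \<longlonglongrightarrow> 0"
      using rho_path_le_rho_max[OF th] by (intro complete_hom_negligible[OF bounds h'])
    then show ?thesis
      unfolding rs_def by (simp only: if_not_P[OF False])
  qed
qed

lemma complete_hom_Cons_path_average_limit:
  assumes th: "th \<in> Paths k Q" and l: "l \<in> set th" and diag: "\<And>i. i \<in> {1..k} \<Longrightarrow> 0 < Q i i"
    and H: "hplus_max k Q = Suc h"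
  shows "(\<lambda>n. complete_hom (rho Q l # map (rho Q) th) (Suc n) / (real (Suc n) * binomial_growth h (rho_max k Q) n))
    \<longlonglongrightarrow> (if th \<in> Paths_max k Q \<and> rho Q l = rho_max k Q
         then (\<Prod>r\<leftarrow>filter (\<lambda>r. r < rho_max k Q) (map (rho Q) th). 1 / (rho_max k Q - r)) / real (Suc h)
         else 0)"
proof -
  have "complete_hom (rho Q l # map (rho Q) th) (Suc n) / (real (Suc n) * binomial_growth h (rho_max k Q) n)
      = complete_hom (rho Q l # map (rho Q) th) (Suc n) / binomial_growth (Suc h) (rho_max k Q) (Suc n) / real (Suc h)"
    for n by (simp add: Suc_mult_binomial_growth mult.commute del: complete_hom.simps of_nat_Suc)
  moreover have "(\<lambda>n. complete_hom (rho Q l # map (rho Q) th) (Suc n) / binomial_growth (Suc h) (rho_max k Q) (Suc n)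
      / real (Suc h)) \<longlonglongrightarrow> (if th \<in> Paths_max k Q \<and> rho Q l = rho_max k Q
         then (\<Prod>r\<leftarrow>filter (\<lambda>r. r < rho_max k Q) (map (rho Q) th). 1 / (rho_max k Q - r)) else 0) / real (Suc h)"
    by (rule tendsto_divide[OF LIMSEQ_Suc[OF complete_hom_Cons_path_limit[OF th l diag H]] tendsto_const of_nat_neq_0])
  ultimately show ?thesis
    by (simp only: if_distrib[of "\<lambda>x. x / _"] div_0)
qed

lemma Paths_max_subset: "Paths_max k Q \<subseteq> Paths k Q"
  by (auto simp: Paths_max_def)

lemma path_prod_pos:
  assumes th: "th \<in> Paths k Q" and Q_nonneg: "\<And>i j. i \<in> {1..k} \<Longrightarrow> j \<in> {1..k} \<Longrightarrow> 0 \<le> Q i j"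
  shows "0 < path_prod Q th"
  unfolding path_prod_def
proof (rule prod_pos)
  fix u assume "u \<in> {..<length th - 1}"
  then have "th ! u \<in> set th" "th ! Suc u \<in> set th" "Suc u < length th" by auto
  then have "0 \<le> Q (th ! u) (th ! Suc u)"
    using Q_nonneg set_Paths_subset[OF th] by blast
  moreover from \<open>Suc u < length th\<close> have "Q (th ! u) (th ! Suc u) \<noteq> 0"
    using th by (simp add: Paths_def admissible_def)
  ultimately show "0 < Q (th ! u) (th ! Suc u)"
    by simp
qed

lemma path_weight_sign:
  assumes th: "th \<in> Paths k Q" and Q_nonneg: "\<And>i j. i \<in> {1..k} \<Longrightarrow> j \<in> {1..k} \<Longrightarrow> 0 \<le> Q i j"
  obtains c where "0 < c" "path_weight k \<pi> Q th = \<pi> (th ! 0) * c"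
proof
  have "0 < 1 / (rho_max k Q - rho Q (th ! u))" if "u \<in> Hminus Q th" for u
    using that rho_path_le_rho_max[OF th] by (simp add: Hminus_def)
  then show "0 < path_prod Q th * (\<Prod>u\<in>Hminus Q th. 1 / (rho_max k Q - rho Q (th ! u)))"
    by (intro mult_pos_pos path_prod_pos[OF th Q_nonneg] prod_pos) auto
qed (simp add: path_weight_def path_prod_def mult.assoc)

lemma path_weight_eq:
  assumes "th \<in> Paths_max k Q"
  shows "path_weight k \<pi> Q th = \<pi> (hd th) * path_prod Q th
    * (\<Prod>r\<leftarrow>filter (\<lambda>r. r < rho_max k Q) (map (rho Q) th). 1 / (rho_max k Q - r))"
proof -
  have th: "th \<in> Paths k Q" and top: "rho_path Q th = rho_max k Q"
    using assms by (auto simp: Paths_max_def)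
  have "(\<Prod>u\<in>Hminus Q th. 1 / (rho_max k Q - rho Q (th ! u)))
      = (\<Prod>r\<leftarrow>filter (\<lambda>r. r < rho_max k Q) (map (rho Q) th). 1 / (rho_max k Q - r))"
    using prod_Hminus_eq_prod_list[of "\<lambda>r. 1 / (rho_max k Q - r)" Q th] top by simp
  then show ?thesis
    using Paths_nonempty[OF th] by (simp add: path_weight_def path_prod_def hd_conv_nth)
qed

lemma sum_path_weight_pos:
  assumes Q_nonneg: "\<And>i j. i \<in> {1..k} \<Longrightarrow> j \<in> {1..k} \<Longrightarrow> 0 \<le> Q i j"
    and \<pi>_nonneg: "\<And>i. i \<in> {1..k} \<Longrightarrow> 0 \<le> \<pi> i" and \<pi>_max: "\<exists>th\<in>Paths_max k Q. \<pi> (th ! 0) \<noteq> 0"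
  shows "0 < (\<Sum>th\<in>Paths_max k Q. path_weight k \<pi> Q th)"
proof -
  have sign: "0 \<le> path_weight k \<pi> Q th \<and> (\<pi> (th ! 0) \<noteq> 0 \<longrightarrow> 0 < path_weight k \<pi> Q th)"
    if "th \<in> Paths_max k Q" for th
  proof -
    from that have th: "th \<in> Paths k Q" using Paths_max_subset by blast
    then have "th ! 0 \<in> {1..k}"
      using set_Paths_subset[OF th] Paths_nonempty[OF th] by (meson length_greater_0_conv nth_mem subsetD)
    moreover obtain c where "0 < c" "path_weight k \<pi> Q th = \<pi> (th ! 0) * c"
      using path_weight_sign[OF th Q_nonneg] by blast
    ultimately show ?thesis
      using \<pi>_nonneg by (auto simp: less_le)
  qed
  from \<pi>_max obtain th where "th \<in> Paths_max k Q" "\<pi> (th ! 0) \<noteq> 0" by blast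
  moreover have "finite (Paths_max k Q)"
    using finite_subset[OF Paths_max_subset finite_Paths] .
  ultimately show ?thesis
    using sign by (intro sum_pos2) auto
qed

lemma survival_path_term_limit:
  assumes th: "th \<in> Paths k Q" and diag: "\<And>i. i \<in> {1..k} \<Longrightarrow> 0 < Q i i"
    and H: "hplus_max k Q = Suc h"
  shows "(\<lambda>n. \<pi> (hd th) * path_prod Q th * complete_hom (map (rho Q) th) n / binomial_growth h (rho_max k Q) n)
    \<longlonglongrightarrow> (if th \<in> Paths_max k Q then path_weight k \<pi> Q th else 0)"
proof -
  have "(\<lambda>n. \<pi> (hd th) * path_prod Q th * (complete_hom (map (rho Q) th) n / binomial_growth h (rho_max k Q) n))
    \<longlonglongrightarrow> \<pi> (hd th) * path_prod Q th * (if th \<in> Paths_max k Q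
         then (\<Prod>r\<leftarrow>filter (\<lambda>r. r < rho_max k Q) (map (rho Q) th). 1 / (rho_max k Q - r)) else 0)"
    by (rule tendsto_mult_left[OF complete_hom_path_limit[OF th diag H]])
  then show ?thesis
    unfolding times_divide_eq_right by (rule tendsto_cong_limit) (simp add: path_weight_eq)
qed

lemma occupation_path_term_limit:
  assumes th: "th \<in> Paths k Q" and diag: "\<And>i. i \<in> {1..k} \<Longrightarrow> 0 < Q i i"
    and H: "hplus_max k Q = Suc h"
  shows "(\<lambda>n. \<pi> (hd th) * (if l \<in> set th then path_prod Q th * complete_hom (rho Q l # map (rho Q) th) (Suc n) else 0)
      / (real (Suc n) * binomial_growth h (rho_max k Q) n))
    \<longlonglongrightarrow> (if th \<in> Paths_max_l k Q l \<and> rho Q l = rho_max k Q then path_weight k \<pi> Q th / real (Suc h) else 0)"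
proof (cases "l \<in> set th")
  case True
  have "(\<lambda>n. \<pi> (hd th) * path_prod Q th
      * (complete_hom (rho Q l # map (rho Q) th) (Suc n) / (real (Suc n) * binomial_growth h (rho_max k Q) n)))
    \<longlonglongrightarrow> \<pi> (hd th) * path_prod Q th * (if th \<in> Paths_max k Q \<and> rho Q l = rho_max k Q
         then (\<Prod>r\<leftarrow>filter (\<lambda>r. r < rho_max k Q) (map (rho Q) th). 1 / (rho_max k Q - r)) / real (Suc h)
         else 0)"
    by (rule tendsto_mult_left[OF complete_hom_Cons_path_average_limit[OF th True diag H]])
  then show ?thesis
    unfolding if_P[OF True] times_divide_eq_right mult.assoc
    by (rule tendsto_cong_limit) (simp add: path_weight_eq Paths_max_l_def Paths_l_def th True mult.assoc)
qed (simp add: Paths_max_l_def Paths_l_def)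

lemma survival_average_limit:
  assumes lt: "lower_triangular k Q" and diag: "\<And>i. i \<in> {1..k} \<Longrightarrow> 0 < Q i i"
    and H: "hplus_max k Q = Suc h"
  shows "(\<lambda>n. (\<Sum>i=1..k. \<pi> i * survival k R Q n i) / binomial_growth h (rho_max k Q) n)
    \<longlonglongrightarrow> (\<Sum>th\<in>Paths_max k Q. path_weight k \<pi> Q th)"
proof -
  have "(\<Sum>i=1..k. \<pi> i * survival k R Q n i)
      = (\<Sum>i=1..k. \<pi> i * (\<Sum>th\<in>Paths_from k Q i. path_prod Q th * complete_hom (map (rho Q) th) n))"
    for n using survival_eq_sum_Paths_from[OF lt] by (intro sum.cong) auto
  then have "(\<Sum>i=1..k. \<pi> i * survival k R Q n i) / binomial_growth h (rho_max k Q) n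
      = (\<Sum>th\<in>Paths k Q. \<pi> (hd th) * path_prod Q th * complete_hom (map (rho Q) th) n
          / binomial_growth h (rho_max k Q) n)" for n
    by (simp only: sum_Paths_by_start) (simp add: sum_divide_distrib mult.assoc)
  moreover have "(\<lambda>n. \<Sum>th\<in>Paths k Q. \<pi> (hd th) * path_prod Q th * complete_hom (map (rho Q) th) n
      / binomial_growth h (rho_max k Q) n)
    \<longlonglongrightarrow> (\<Sum>th\<in>Paths k Q. if th \<in> Paths_max k Q then path_weight k \<pi> Q th else 0)"
    by (intro tendsto_sum survival_path_term_limit diag H)
  moreover have "(\<Sum>th\<in>Paths k Q. if th \<in> Paths_max k Q then path_weight k \<pi> Q th else 0)
      = (\<Sum>th\<in>Paths_max k Q. path_weight k \<pi> Q th)"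
    using sum.inter_restrict[OF finite_Paths, of "path_weight k \<pi> Q" k Q "Paths_max k Q"]
    by (simp add: Int_absorb1 Paths_max_subset)
  ultimately show ?thesis
    by simp
qed

lemma occupation_average_limit:
  assumes lt: "lower_triangular k Q" and diag: "\<And>i. i \<in> {1..k} \<Longrightarrow> 0 < Q i i"
    and H: "hplus_max k Q = Suc h"
  shows "(\<lambda>n. (\<Sum>i=1..k. \<pi> i * occupation k R Q l n i) / real (n + 1) / binomial_growth h (rho_max k Q) n)
    \<longlonglongrightarrow> (if rho Q l = rho_max k Q
         then (\<Sum>th\<in>Paths_max_l k Q l. path_weight k \<pi> Q th) / real (Suc h) else 0)"
proof -
  define T where "T n th = (if l \<in> set th
      then path_prod Q th * complete_hom (rho Q l # map (rho Q) th) (Suc n) else 0)" for n th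
  have "(\<Sum>i=1..k. \<pi> i * occupation k R Q l n i) = (\<Sum>i=1..k. \<pi> i * (\<Sum>th\<in>Paths_from k Q i. T n th))" for n
    using occupation_eq_sum_Paths_from[OF lt] by (intro sum.cong) (auto simp: T_def)
  then have "(\<Sum>i=1..k. \<pi> i * occupation k R Q l n i) / real (n + 1) / binomial_growth h (rho_max k Q) n
      = (\<Sum>th\<in>Paths k Q. \<pi> (hd th) * T n th / (real (Suc n) * binomial_growth h (rho_max k Q) n))" for n
    by (simp only: sum_Paths_by_start) (simp add: sum_divide_distrib)
  moreover have "(\<lambda>n. \<Sum>th\<in>Paths k Q. \<pi> (hd th) * T n th / (real (Suc n) * binomial_growth h (rho_max k Q) n))
    \<longlonglongrightarrow> (\<Sum>th\<in>Paths k Q. if th \<in> Paths_max_l k Q l \<and> rho Q l = rho_max k Q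
         then path_weight k \<pi> Q th / real (Suc h) else 0)"
    unfolding T_def by (intro tendsto_sum occupation_path_term_limit diag H)
  moreover have "(\<Sum>th\<in>Paths k Q. if th \<in> Paths_max_l k Q l \<and> rho Q l = rho_max k Q
         then path_weight k \<pi> Q th / real (Suc h) else 0)
      = (if rho Q l = rho_max k Q then (\<Sum>th\<in>Paths_max_l k Q l. path_weight k \<pi> Q th) / real (Suc h) else 0)"
    using sum.inter_restrict[OF finite_Paths, of "\<lambda>th. path_weight k \<pi> Q th / real (Suc h)" k Q "Paths_max_l k Q l"]
    by (simp add: Int_absorb1 Paths_max_l_def Paths_max_subset le_infI2 sum_divide_distrib)
  ultimately show ?thesis
    by simp
qed

lemma occ_cond_exp_limit:
  assumes lt: "lower_triangular k Q" and diag: "\<And>i. i \<in> {1..k} \<Longrightarrow> 0 < Q i i"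
    and Q_nonneg: "\<And>i j. i \<in> {1..k} \<Longrightarrow> j \<in> {1..k} \<Longrightarrow> 0 \<le> Q i j"
    and \<pi>_nonneg: "\<And>i. i \<in> {1..k} \<Longrightarrow> 0 \<le> \<pi> i" and \<pi>_max: "\<exists>th\<in>Paths_max k Q. \<pi> (th ! 0) \<noteq> 0"
  shows "occ_cond_exp k \<pi> R Q l \<longlonglongrightarrow> (if rho Q l = rho_max k Q
    then (\<Sum>th\<in>Paths_max_l k Q l. path_weight k \<pi> Q th)
      / (real (hplus_max k Q) * (\<Sum>th\<in>Paths_max k Q. path_weight k \<pi> Q th))
    else 0)"
proof -
  define W where "W = (\<Sum>th\<in>Paths_max k Q. path_weight k \<pi> Q th)"
  define \<rho> where "\<rho> = rho_max k Q"
  obtain th0 where th0: "th0 \<in> Paths_max k Q" using \<pi>_max by blast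
  then have "0 < hplus_max k Q"
    using hplus_pos[OF Paths_nonempty, of th0 k Q Q] by (simp add: Paths_max_def)
  then obtain h where H: "hplus_max k Q = Suc h"
    using gr0_conv_Suc by blast
  have th0_Paths: "th0 \<in> Paths k Q" and "rho_path Q th0 = \<rho>"
    using th0 by (auto simp: Paths_max_def \<rho>_def)
  then have "0 < \<rho>"
    using rho_Paths_bounds[OF th0_Paths diag] rho_path_in_image[OF Paths_nonempty[OF th0_Paths]] by fastforce
  have "0 < W"
    unfolding W_def by (rule sum_path_weight_pos[OF Q_nonneg \<pi>_nonneg \<pi>_max])
  have "(\<lambda>n. ((\<Sum>i=1..k. \<pi> i * occupation k R Q l n i) / real (n + 1) / binomial_growth h \<rho> n)
      / ((\<Sum>i=1..k. \<pi> i * survival k R Q n i) / binomial_growth h \<rho> n))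
    \<longlonglongrightarrow> (if rho Q l = \<rho> then (\<Sum>th\<in>Paths_max_l k Q l. path_weight k \<pi> Q th) / real (Suc h) else 0) / W"
    unfolding \<rho>_def W_def
    using \<open>0 < W\<close> by (intro tendsto_divide occupation_average_limit survival_average_limit lt diag H) (auto simp: W_def)
  moreover have "eventually (\<lambda>n. ((\<Sum>i=1..k. \<pi> i * occupation k R Q l n i) / real (n + 1) / binomial_growth h \<rho> n)
      / ((\<Sum>i=1..k. \<pi> i * survival k R Q n i) / binomial_growth h \<rho> n) = occ_cond_exp k \<pi> R Q l n) sequentially"
    using eventually_ge_at_top[of h]
    by eventually_elim (use \<open>0 < \<rho>\<close> in \<open>simp add: occ_cond_exp_eq binomial_growth_pos less_imp_neq[symmetric]\<close>)
  ultimately have "occ_cond_exp k \<pi> R Q l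
      \<longlonglongrightarrow> (if rho Q l = \<rho> then (\<Sum>th\<in>Paths_max_l k Q l. path_weight k \<pi> Q th) / real (Suc h) else 0) / W"
    by (rule Lim_transform_eventually)
  then show ?thesis
    by (rule tendsto_cong_limit) (simp add: H W_def \<rho>_def)
qed

theorem corollary3p17:
  fixes k :: nat and R :: "nat \<Rightarrow> real" and Q :: "nat \<Rightarrow> nat \<Rightarrow> real"
    and \<pi> :: "nat \<Rightarrow> real"
  assumes k2: "k \<ge> 2"
    and stoch: "stochastic k (Pmat R Q)"
    and R_nz: "\<exists>i\<in>{1..k}. R i \<noteq> 0"
    and Q_nz: "\<exists>i\<in>{1..k}. \<exists>j\<in>{1..k}. Q i j \<noteq> 0"
    and eig: "\<And>z. is_eigenvalue k Q z \<Longrightarrow> cmod z < 1"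
    and lt: "lower_triangular k Q"
    and diag_pos: "\<And>i. i \<in> {1..k} \<Longrightarrow> Q i i > 0"
    and pi_nonneg: "\<And>i. i \<in> {1..k} \<Longrightarrow> \<pi> i \<ge> 0"
    and pi_sum: "(\<Sum>i=1..k. \<pi> i) = 1"
    and pi_max: "\<exists>th\<in>Paths_max k Q. \<pi> (th ! 0) \<noteq> 0"
  shows "\<forall>l\<in>{1..k}.
     ((rho Q l < rho_max k Q \<or> Paths_max_l k Q l = {}) \<longrightarrow>
        (occ_cond_exp k \<pi> R Q l \<longlonglongrightarrow> 0)) \<and>
     ((rho Q l = rho_max k Q \<and> Paths_max_l k Q l \<noteq> {}) \<longrightarrow>
        (occ_cond_exp k \<pi> R Q l \<longlonglongrightarrow>
          (1 / real (hplus_max k Q)) *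
          ((\<Sum>th\<in>Paths_max_l k Q l. path_weight k \<pi> Q th) /
           (\<Sum>th\<in>Paths_max k Q. path_weight k \<pi> Q th))))"
proof (intro ballI conjI impI)
  fix l assume "l \<in> {1..k}"
  have Q_nonneg: "0 \<le> Q i j" if "i \<in> {1..k}" "j \<in> {1..k}" for i j
    using stoch that by (force simp: stochastic_def Pmat_def)
  note limit = occ_cond_exp_limit[OF lt diag_pos Q_nonneg pi_nonneg pi_max, of R l]
  show "occ_cond_exp k \<pi> R Q l \<longlonglongrightarrow> 0"
    if "rho Q l < rho_max k Q \<or> Paths_max_l k Q l = {}"
    using limit that by (auto cong: if_cong)
  show "occ_cond_exp k \<pi> R Q l \<longlonglongrightarrow> 1 / real (hplus_max k Q) *
      ((\<Sum>th\<in>Paths_max_l k Q l. path_weight k \<pi> Q th) / (\<Sum>th\<in>Paths_max k Q. path_weight k \<pi> Q th))"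
    if "rho Q l = rho_max k Q \<and> Paths_max_l k Q l \<noteq> {}"
    using limit that by simp
qed

end
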